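(* Let $r \ge 3$ and $n \ge 2r^5$. Let $\mathcal{H}$ be an intersecting $r$-uniform $n$-vertex hypergraph with $\delta_{r-1}^+(\mathcal{H}) \ge 3$ having the maximum number of hyperedges among all intersecting $r$-uniform $n$-vertex hypergraphs with minimum positive co-degree at least $3$. Then $\mathcal{H}$ is a $3$-kernel system.
   Context: A hypergraph is intersecting if every two of its hyperedges share at least one vertex. For a non-empty $r$-uniform hypergraph $\mathcal{H}$, the minimum positive co-degree $\delta_{r-1}^+(\mathcal{H})$ is the largest integer $k$ such that every $(r-1)$-set of vertices that is contained in at least one hyperedge of $\mathcal{H}$ is contained in at least $k$ distinct hyperedges of $\mathcal{H}$; for the empty hypergraph it is $0$. Given integers $r \ge k \ge 1$, an $r$-uniform $k$-kernel system on vertex set $V$ is a hypergraph whose hyperedge set is $\{E \in \binom{V}{r} : |E \cap X| \ge k\}$ for some set $X \subseteq V$ with $|X| = 2k-1$. *)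

theory Defs
  imports Main
begin

definition uniform_hypergraph :: "'a set \<Rightarrow> nat \<Rightarrow> 'a set set \<Rightarrow> bool" where
  "uniform_hypergraph V r H \<longleftrightarrow> (\<forall>E\<in>H. E \<subseteq> V \<and> card E = r)"

definition intersecting :: "'a set set \<Rightarrow> bool" where
  "intersecting H \<longleftrightarrow> (\<forall>E\<in>H. \<forall>F\<in>H. E \<inter> F \<noteq> {})"

definition min_pos_codegree :: "nat \<Rightarrow> 'a set set \<Rightarrow> nat" where
  "min_pos_codegree r H =
     (if H = {} then 0
      else (GREATEST k. \<forall>S. card S = r - 1 \<and> (\<exists>E\<in>H. S \<subseteq> E)
                 \<longrightarrow> card {E\<in>H. S \<subseteq> E} \<ge> k))"

definition kernel_system :: "'a set \<Rightarrow> nat \<Rightarrow> nat \<Rightarrow> 'a set set \<Rightarrow> bool" where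
  "kernel_system V r k H \<longleftrightarrow>
     (\<exists>X. X \<subseteq> V \<and> card X = 2 * k - 1 \<and>
          H = {E. E \<subseteq> V \<and> card E = r \<and> card (E \<inter> X) \<ge> k})"

end

(*
  Every (r-1)-subset of an edge extends to at least three edges, so H has no transversal
  of size at most 2. If H has no transversal of size 3 either, branching over the vertices
  of edges that avoid a partial transversal bounds |H| by r^4 times the largest degree of a
  4-set. Otherwise fix a 3-transversal U and call an (r-1)-set R disjoint from U a core if
  R + u is an edge for every u in U. Every edge either contains U, or consists of a core and
  one vertex of U, or of a core minus one vertex and two vertices of U; moreover the cores
  form an intersecting family. If all cores share two vertices d and e, every edge meets
  U + {d, e} in at least three vertices; otherwise the cores admit the same branching, and
  for n >= 2 r^5 the resulting bound stays below the 10 binom(n-5, r-3) edges of a 3-kernel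
  system. Hence an extremal H lies inside a kernel system, and maximality forces equality.
*)
theory Submission
  imports Defs
begin

definition link :: "'a set set \<Rightarrow> 'a set \<Rightarrow> 'a set" where
  "link H S = {x. x \<notin> S \<and> insert x S \<in> H}"

definition transversal :: "'a set set \<Rightarrow> 'a set \<Rightarrow> bool" where
  "transversal H W \<longleftrightarrow> (\<forall>E\<in>H. E \<inter> W \<noteq> {})"

definition kernel_edges :: "'a set \<Rightarrow> nat \<Rightarrow> nat \<Rightarrow> 'a set \<Rightarrow> 'a set set" where
  "kernel_edges V r k X = {E. E \<subseteq> V \<and> card E = r \<and> k \<le> card (E \<inter> X)}"

lemma kernel_system_iff:
  "kernel_system V r k H \<longleftrightarrow> (\<exists>X. X \<subseteq> V \<and> card X = 2 * k - 1 \<and> H = kernel_edges V r k X)"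
  by (simp add: kernel_system_def kernel_edges_def)

lemma card_UN_le_mult:
  assumes "finite I" "\<And>i. i \<in> I \<Longrightarrow> card (A i) \<le> b"
  shows "card (\<Union>i\<in>I. A i) \<le> card I * b"
proof -
  have "card (\<Union>i\<in>I. A i) \<le> (\<Sum>i\<in>I. card (A i))" by (rule card_UN_le[OF assms(1)])
  also have "\<dots> \<le> card I * b" using sum_bounded_above[of I "\<lambda>i. card (A i)" b] assms(2) by simp
  finally show ?thesis .
qed

lemma uniform_hypergraph_finite:
  "finite V \<Longrightarrow> uniform_hypergraph V r H \<Longrightarrow> finite H"
  by (rule finite_subset[of _ "Pow V"]) (auto simp: uniform_hypergraph_def)

lemma card_supersets_le:
  assumes "finite V"
  shows "card {E. E \<subseteq> V \<and> card E = r \<and> T \<subseteq> E} \<le> (card V - card T) choose (r - card T)"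
proof (cases "T \<subseteq> V")
  case False
  then have "{E. E \<subseteq> V \<and> card E = r \<and> T \<subseteq> E} = {}" by blast
  then show ?thesis by (simp only: card.empty le0)
next
  case True
  let ?B = "{B. B \<subseteq> V - T \<and> card B = r - card T}"
  have "finite T" using True assms finite_subset by blast
  have "{E. E \<subseteq> V \<and> card E = r \<and> T \<subseteq> E} \<subseteq> (\<lambda>B. B \<union> T) ` ?B"
  proof
    fix E assume E: "E \<in> {E. E \<subseteq> V \<and> card E = r \<and> T \<subseteq> E}"
    then have "card (E - T) = r - card T"
      using \<open>finite T\<close> assms finite_subset by (auto simp: card_Diff_subset)
    with E show "E \<in> (\<lambda>B. B \<union> T) ` ?B" by (intro image_eqI[of _ _ "E - T"]) auto
  qed
  then have "card {E. E \<subseteq> V \<and> card E = r \<and> T \<subseteq> E} \<le> card ?B"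
    using assms by (intro surj_card_le) auto
  also have "\<dots> = (card V - card T) choose (r - card T)"
    using True assms \<open>finite T\<close> by (simp add: n_subsets card_Diff_subset)
  finally show ?thesis .
qed

lemma card_edges_containing_le:
  assumes "finite V" "uniform_hypergraph V r H"
  shows "card {E\<in>H. T \<subseteq> E} \<le> (if card T \<le> r then (card V - card T) choose (r - card T) else 0)"
proof (cases "card T \<le> r")
  case True
  have "card {E\<in>H. T \<subseteq> E} \<le> card {E. E \<subseteq> V \<and> card E = r \<and> T \<subseteq> E}"
    using assms by (intro card_mono) (auto simp: uniform_hypergraph_def finite_Collect_subsets)
  with card_supersets_le[OF assms(1)] True show ?thesis by (simp add: le_trans)
next
  case False
  have empty: "{E\<in>H. T \<subseteq> E} = {}"
  proof (intro equals0I)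
    fix E assume E: "E \<in> {E\<in>H. T \<subseteq> E}"
    then have "E \<subseteq> V" "card E = r" using assms(2) by (auto simp: uniform_hypergraph_def)
    then have "card T \<le> r" using E assms(1) finite_subset[of E V] card_mono[of E T] by auto
    with False show False by simp
  qed
  with False show ?thesis unfolding empty by simp
qed

lemma card_edges_containing_eq_card_link:
  assumes "\<forall>F\<in>H. card F = r" "1 \<le> r" "S \<subseteq> E" "E \<in> H" "card S = r - 1"
  shows "card {F\<in>H. S \<subseteq> F} = card (link H S)"
proof -
  have "finite S" using assms finite_subset[of S E] card.infinite[of E] by fastforce
  have "{F\<in>H. S \<subseteq> F} = (\<lambda>x. insert x S) ` link H S"
  proof (intro equalityI subsetI)
    fix F assume F: "F \<in> {F\<in>H. S \<subseteq> F}"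
    then have "card (F - S) = 1"
      using assms \<open>finite S\<close> by (simp add: card_Diff_subset)
    then obtain x where "F - S = {x}" by (auto simp: card_1_singleton_iff)
    with F have "F = insert x S" "x \<notin> S" by blast+
    with F show "F \<in> (\<lambda>x. insert x S) ` link H S" by (auto simp: link_def)
  qed (auto simp: link_def)
  moreover have "inj_on (\<lambda>x. insert x S) (link H S)"
    by (rule inj_onI) (auto simp: link_def)
  ultimately show ?thesis by (simp add: card_image)
qed

lemma le_min_pos_codegree_iff_codegree:
  assumes "finite H" "H \<noteq> {}" "\<forall>E\<in>H. r - 1 \<le> card E"
  shows "k \<le> min_pos_codegree r H \<longleftrightarrow>
    (\<forall>S. card S = r - 1 \<and> (\<exists>E\<in>H. S \<subseteq> E) \<longrightarrow> k \<le> card {E\<in>H. S \<subseteq> E})"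
proof -
  define P where "P = (\<lambda>k.
    \<forall>S. card S = r - 1 \<and> (\<exists>E\<in>H. S \<subseteq> E) \<longrightarrow> k \<le> card {E\<in>H. S \<subseteq> E})"
  have mpc: "min_pos_codegree r H = Greatest P"
    unfolding min_pos_codegree_def P_def using assms(2) by (simp only: if_False)
  obtain E0 where "E0 \<in> H" using assms(2) by blast
  then have "r - 1 \<le> card E0" using assms(3) by blast
  then obtain S0 where S0: "S0 \<subseteq> E0" "card S0 = r - 1" "finite S0"
    by (rule obtain_subset_with_card_n)
  have bound: "k \<le> card H" if "P k" for k
  proof -
    have "k \<le> card {E\<in>H. S0 \<subseteq> E}"
      using that \<open>E0 \<in> H\<close> S0 unfolding P_def by blast
    also have "\<dots> \<le> card H" using assms(1) by (intro card_mono) auto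
    finally show ?thesis .
  qed
  have "P 0" by (simp add: P_def)
  then have greatest: "P (Greatest P)" using bound by (rule GreatestI_nat)
  have "k \<le> Greatest P \<longleftrightarrow> P k"
  proof
    assume "k \<le> Greatest P"
    with greatest show "P k" unfolding P_def using le_trans by blast
  qed (rule Greatest_le_nat[OF _ bound])
  then show ?thesis unfolding mpc P_def .
qed

lemma le_min_pos_codegree_iff:
  assumes "finite H" "H \<noteq> {}" "\<forall>E\<in>H. card E = r" "1 \<le> r"
  shows "k \<le> min_pos_codegree r H \<longleftrightarrow>
    (\<forall>E\<in>H. \<forall>S\<subseteq>E. card S = r - 1 \<longrightarrow> k \<le> card (link H S))"
proof -
  have eq: "card {F\<in>H. S \<subseteq> F} = card (link H S)" if "E \<in> H" "S \<subseteq> E" "card S = r - 1" for E S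
    using card_edges_containing_eq_card_link[OF assms(3,4) that(2,1,3)] .
  have "\<forall>E\<in>H. r - 1 \<le> card E" using assms(3) by simp
  with assms(1,2) have "k \<le> min_pos_codegree r H \<longleftrightarrow>
      (\<forall>S. card S = r - 1 \<and> (\<exists>E\<in>H. S \<subseteq> E) \<longrightarrow> k \<le> card {E\<in>H. S \<subseteq> E})"
    by (rule le_min_pos_codegree_iff_codegree)
  also have "\<dots> \<longleftrightarrow> (\<forall>E\<in>H. \<forall>S\<subseteq>E. card S = r - 1 \<longrightarrow> k \<le> card (link H S))"
  proof (intro iffI ballI allI impI)
    fix E S assume "\<forall>S. card S = r - 1 \<and> (\<exists>E\<in>H. S \<subseteq> E) \<longrightarrow> k \<le> card {E\<in>H. S \<subseteq> E}"
      and ES: "E \<in> H" "S \<subseteq> E" "card S = r - 1"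
    then have "k \<le> card {F\<in>H. S \<subseteq> F}" by blast
    then show "k \<le> card (link H S)" using eq[OF ES] by simp
  next
    fix S assume R: "\<forall>E\<in>H. \<forall>S\<subseteq>E. card S = r - 1 \<longrightarrow> k \<le> card (link H S)"
      and "card S = r - 1 \<and> (\<exists>E\<in>H. S \<subseteq> E)"
    then obtain E where ES: "E \<in> H" "S \<subseteq> E" "card S = r - 1" by blast
    with R have "k \<le> card (link H S)" by blast
    then show "k \<le> card {E\<in>H. S \<subseteq> E}" using eq[OF ES] by simp
  qed
  finally show ?thesis .
qed

lemma card_edges_containing_le_branching:
  fixes H :: "'a set set"
  assumes "finite H"
    and branch: "\<And>T. finite T \<Longrightarrow> card T < k \<Longrightarrow>
      \<exists>B. finite B \<and> card B \<le> b \<and> B \<inter> T = {} \<and> (\<forall>E\<in>H. T \<subseteq> E \<longrightarrow> B \<inter> E \<noteq> {})"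
    and deg: "\<And>T. card T = k \<Longrightarrow> card {E\<in>H. T \<subseteq> E} \<le> D"
  shows "finite T \<Longrightarrow> card T + m = k \<Longrightarrow> card {E\<in>H. T \<subseteq> E} \<le> b ^ m * D"
proof (induction m arbitrary: T)
  case 0
  then show ?case using deg by simp
next
  case (Suc m)
  then have "card T < k" by simp
  then obtain B where B: "finite B" "card B \<le> b" "B \<inter> T = {}"
    "\<forall>E\<in>H. T \<subseteq> E \<longrightarrow> B \<inter> E \<noteq> {}"
    using branch[OF Suc.prems(1)] by blast
  have "{E\<in>H. T \<subseteq> E} \<subseteq> (\<Union>y\<in>B. {E\<in>H. insert y T \<subseteq> E})"
  proof
    fix E assume E: "E \<in> {E\<in>H. T \<subseteq> E}"
    with B(4) obtain y where "y \<in> B" "y \<in> E" by blast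
    with E show "E \<in> (\<Union>y\<in>B. {E\<in>H. insert y T \<subseteq> E})" by blast
  qed
  then have "card {E\<in>H. T \<subseteq> E} \<le> card (\<Union>y\<in>B. {E\<in>H. insert y T \<subseteq> E})"
    using assms(1) B(1) by (intro card_mono) auto
  also have "\<dots> \<le> card B * (b ^ m * D)"
  proof (rule card_UN_le_mult[OF B(1)])
    fix y assume "y \<in> B"
    then have "y \<notin> T" using B(3) by blast
    with Suc.prems have "finite (insert y T)" "card (insert y T) + m = k" by auto
    then show "card {E\<in>H. insert y T \<subseteq> E} \<le> b ^ m * D" by (rule Suc.IH)
  qed
  also have "\<dots> \<le> b ^ Suc m * D" using B(2) by (simp add: mult_le_mono1)
  finally show ?case .
qed

lemma finite_kernel_edges: "finite V \<Longrightarrow> finite (kernel_edges V r k X)"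
  by (rule finite_subset[of _ "Pow V"]) (auto simp: kernel_edges_def)

lemma kernel_edges_uniform: "uniform_hypergraph V r (kernel_edges V r k X)"
  by (simp add: uniform_hypergraph_def kernel_edges_def)

lemma kernel_edges_intersecting:
  assumes "finite X" "card X = 2 * k - 1" "1 \<le> k"
  shows "intersecting (kernel_edges V r k X)"
  unfolding intersecting_def
proof (intro ballI notI)
  fix E F assume E: "E \<in> kernel_edges V r k X" and F: "F \<in> kernel_edges V r k X" and "E \<inter> F = {}"
  then have "card (E \<inter> X) + card (F \<inter> X) = card ((E \<inter> X) \<union> (F \<inter> X))"
    using assms(1) by (intro card_Un_disjoint[symmetric]) auto
  also have "\<dots> \<le> card X" using assms(1) by (intro card_mono) auto
  finally show False using E F assms(2,3) unfolding kernel_edges_def by auto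
qed

lemma card_kernel_edges_ge:
  assumes "finite V" "X \<subseteq> V" "k \<le> r"
  shows "(card X choose k) * ((card V - card X) choose (r - k)) \<le> card (kernel_edges V r k X)"
proof -
  let ?P = "{A. A \<subseteq> X \<and> card A = k}" and ?Q = "{B. B \<subseteq> V - X \<and> card B = r - k}"
  have "finite X" using assms finite_subset by blast
  have "inj_on (\<lambda>(A, B). A \<union> B) (?P \<times> ?Q)"
  proof (rule inj_onI, clarify)
    fix A B A' B'
    assume "A \<subseteq> X" "B \<subseteq> V - X" "A' \<subseteq> X" "B' \<subseteq> V - X" "A \<union> B = A' \<union> B'"
    then have "A = (A' \<union> B') \<inter> X" "B = (A' \<union> B') - X" by blast+
    then show "A = A' \<and> B = B'" using \<open>A' \<subseteq> X\<close> \<open>B' \<subseteq> V - X\<close> by blast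
  qed
  moreover have "(\<lambda>(A, B). A \<union> B) ` (?P \<times> ?Q) \<subseteq> kernel_edges V r k X"
  proof
    fix E assume "E \<in> (\<lambda>(A, B). A \<union> B) ` (?P \<times> ?Q)"
    then obtain A B where A: "A \<subseteq> X" "card A = k" and B: "B \<subseteq> V - X" "card B = r - k"
      and E: "E = A \<union> B" by blast
    have "finite A" "finite B" using A B \<open>finite X\<close> assms(1) finite_subset by blast+
    then have "card (A \<union> B) = r" using A B assms(3) by (subst card_Un_disjoint) auto
    moreover have "(A \<union> B) \<inter> X = A" using A B by blast
    ultimately show "E \<in> kernel_edges V r k X"
      using A B E assms(2) by (auto simp: kernel_edges_def)
  qed
  ultimately have "card (?P \<times> ?Q) \<le> card (kernel_edges V r k X)"
    using assms(1) by (intro card_inj_on_le finite_kernel_edges)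
  then show ?thesis
    using assms \<open>finite X\<close> by (simp add: card_cartesian_product n_subsets card_Diff_subset)
qed

lemma kernel_edges_min_pos_codegree:
  assumes "finite V" "X \<subseteq> V" "card X = 2 * k - 1" "1 \<le> k" "k \<le> r" "r + k \<le> card V + 1"
  shows "k \<le> min_pos_codegree r (kernel_edges V r k X)"
proof -
  let ?K = "kernel_edges V r k X"
  have "finite X" using assms finite_subset by blast
  have "0 < (card X choose k) * ((card V - card X) choose (r - k))"
    using assms(3-6) by simp linarith
  then have "?K \<noteq> {}" using card_kernel_edges_ge[OF assms(1,2,5)] by auto
  moreover have "k \<le> card (link ?K S)" if E: "E \<in> ?K" and S: "S \<subseteq> E" "card S = r - 1" for E S
  proof -
    have "E \<subseteq> V" "card E = r" "k \<le> card (E \<inter> X)" using E by (auto simp: kernel_edges_def)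
    then have "finite E" "S \<subseteq> V" using assms(1) S(1) finite_subset by blast+
    then have "finite S" using S(1) finite_subset by blast
    have "card (E \<inter> X) \<le> card ((S \<inter> X) \<union> (E - S))"
      using \<open>finite E\<close> \<open>finite S\<close> by (intro card_mono) auto
    also have "\<dots> \<le> card (S \<inter> X) + card (E - S)" by (rule card_Un_le)
    also have "card (E - S) = 1"
      using \<open>card E = r\<close> S assms(4,5) \<open>finite S\<close> by (simp add: card_Diff_subset)
    finally have SX: "k \<le> card (S \<inter> X) + 1" using \<open>k \<le> card (E \<inter> X)\<close> by linarith
    have in_link: "y \<in> link ?K S" if "y \<in> V - S" "k \<le> card (insert y S \<inter> X)" for y
      using that \<open>S \<subseteq> V\<close> \<open>finite S\<close> S(2) assms(4,5)
      by (auto simp: link_def kernel_edges_def)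
    have fin_link: "finite (link ?K S)"
      by (rule finite_subset[OF _ assms(1)]) (auto simp: link_def kernel_edges_def)
    show ?thesis
    proof (cases "k \<le> card (S \<inter> X)")
      case True
      have "V - S \<subseteq> link ?K S"
      proof
        fix y assume y: "y \<in> V - S"
        have "card (S \<inter> X) \<le> card (insert y S \<inter> X)" using \<open>finite X\<close> by (intro card_mono) auto
        with True y show "y \<in> link ?K S" by (intro in_link) auto
      qed
      then have "card (V - S) \<le> card (link ?K S)" by (rule card_mono[OF fin_link])
      moreover have "card (V - S) = card V - (r - 1)"
        using \<open>S \<subseteq> V\<close> \<open>finite S\<close> S(2) by (simp add: card_Diff_subset)
      ultimately show ?thesis using assms(4-6) by linarith
    next
      case False
      have "X - S \<subseteq> link ?K S"
      proof
        fix y assume y: "y \<in> X - S"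
        then have "insert y S \<inter> X = insert y (S \<inter> X)" by blast
        then have "card (insert y S \<inter> X) = card (S \<inter> X) + 1" using y \<open>finite X\<close> by simp
        with SX y assms(2) show "y \<in> link ?K S" by (intro in_link) auto
      qed
      then have "card (X - S) \<le> card (link ?K S)" by (rule card_mono[OF fin_link])
      moreover have "card (X - S) = card X - card (X \<inter> S)"
        using \<open>finite X\<close> by (simp add: card_Diff_subset_Int)
      ultimately show ?thesis using False SX assms(3,4) by (simp add: Int_commute)
    qed
  qed
  moreover have "\<forall>E\<in>?K. card E = r" by (simp add: kernel_edges_def)
  ultimately show ?thesis
    using le_min_pos_codegree_iff[OF finite_kernel_edges[OF assms(1)]] assms(4,5) by simp
qed

lemma kernel_edges_3_competitor:
  assumes "finite V" "X \<subseteq> V" "card X = 5" "3 \<le> r" "r + 2 \<le> card V"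
  shows "uniform_hypergraph V r (kernel_edges V r 3 X) \<and> intersecting (kernel_edges V r 3 X)
    \<and> 3 \<le> min_pos_codegree r (kernel_edges V r 3 X)"
proof -
  have "finite X" using assms(2,1) by (rule finite_subset)
  then have "intersecting (kernel_edges V r 3 X)" using assms(3) by (intro kernel_edges_intersecting) auto
  moreover have "3 \<le> min_pos_codegree r (kernel_edges V r 3 X)"
    using assms by (intro kernel_edges_min_pos_codegree) auto
  ultimately show ?thesis using kernel_edges_uniform by blast
qed

lemma choose_Suc_Suc_le:
  "Suc (Suc p) choose Suc j \<le> (p choose Suc j) + 2 * (Suc (Suc p) choose j)"
proof -
  have "Suc (Suc p) choose Suc j = (Suc p choose j) + (p choose j) + (p choose Suc j)" by simp
  moreover have "Suc p choose j \<le> Suc (Suc p) choose j" "p choose j \<le> Suc (Suc p) choose j"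
    by (simp_all add: binomial_right_mono)
  ultimately show ?thesis by linarith
qed

lemma choose_Suc_Suc_mult_le:
  assumes "3 * j \<le> p"
  shows "(Suc (Suc p) choose j) * (p - 3 * j) \<le> Suc j * (p choose Suc j)"
proof -
  let ?M = "Suc (Suc p) choose j"
  have "p - 3 * j + 2 * Suc j = Suc (Suc p) - j" using assms by simp
  then have "?M * (p - 3 * j) + ?M * (2 * Suc j) = (Suc (Suc p) - j) * ?M"
    by (metis add_mult_distrib2 mult.commute)
  also have "\<dots> = Suc j * (Suc (Suc p) choose Suc j)"
    by (metis binomial_absorption binomial_absorb_comp)
  also have "\<dots> \<le> Suc j * ((p choose Suc j) + 2 * ?M)"
    by (rule mult_le_mono2[OF choose_Suc_Suc_le])
  finally show ?thesis by (simp add: algebra_simps)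
qed

lemma kernel_count_exceeds:
  fixes r n :: nat
  assumes "3 \<le> r" "2 * r ^ 5 \<le> n"
  shows "((n - 3) choose (r - 3)) + 3 * r ^ 4 * (if 4 \<le> r then (n - 3) choose (r - 4) else 0)
    < 10 * ((n - 5) choose (r - 3))"
proof (cases "r = 3")
  case True
  then show ?thesis by simp
next
  case False
  define j p where "j = r - 4" and "p = n - 5"
  let ?M = "Suc (Suc p) choose j" and ?N = "p choose Suc j"
  have r: "r = j + 4" using assms(1) False by (simp add: j_def)
  have r54: "r ^ 5 = r * r ^ 4" by (simp add: eval_nat_numeral)
  have "(4::nat) ^ 4 \<le> r ^ 4" using r by (intro power_mono) auto
  then have r5: "256 * r \<le> r ^ 5" using r54 by simp
  then have p: "2 * r ^ 5 \<le> p + 5" "3 * j \<le> p" "Suc j \<le> p"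
    using assms(2) r by (auto simp: p_def)
  have "(2 + 3 * r ^ 4) * Suc j \<le> (2 + 3 * r ^ 4) * r" using r by (intro mult_le_mono2) simp
  also have "\<dots> = 2 * r + 3 * r ^ 5" using r54 by (simp add: algebra_simps)
  also have "\<dots> < 9 * (p - 3 * j)" using p r5 r by linarith
  finally have big: "(2 + 3 * r ^ 4) * Suc j < 9 * (p - 3 * j)" .
  have "((2 + 3 * r ^ 4) * ?M) * (p - 3 * j) = (2 + 3 * r ^ 4) * (?M * (p - 3 * j))"
    by (simp only: mult.assoc)
  also have "\<dots> \<le> (2 + 3 * r ^ 4) * (Suc j * ?N)"
    using choose_Suc_Suc_mult_le[OF p(2)] by (rule mult_le_mono2)
  also have "\<dots> = ((2 + 3 * r ^ 4) * Suc j) * ?N" by (simp only: mult.assoc)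
  also have "\<dots> < (9 * (p - 3 * j)) * ?N" using big by (rule mult_less_mono1) (use p in simp)
  also have "\<dots> = (9 * ?N) * (p - 3 * j)" by (simp only: mult.commute mult.left_commute)
  finally have "(2 + 3 * r ^ 4) * ?M < 9 * ?N" by (simp add: mult_less_cancel2)
  then have "(Suc (Suc p) choose Suc j) + 3 * r ^ 4 * ?M < 10 * ?N"
    using choose_Suc_Suc_le[of p j] by (simp add: algebra_simps)
  moreover have "n - 3 = Suc (Suc p)" "n - 5 = p" using p r by (auto simp: p_def)
  ultimately show ?thesis using r by simp
qed

lemma link_subset_transversal:
  assumes "transversal H W" "S \<inter> W = {}"
  shows "link H S \<subseteq> W"
  using assms unfolding transversal_def link_def by blast

locale codegree3_intersecting =
  fixes V :: "'a set" and H :: "'a set set" and r :: nat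
  assumes finite_V: "finite V"
    and uniform: "uniform_hypergraph V r H"
    and intersecting: "intersecting H"
    and codegree: "3 \<le> min_pos_codegree r H"
    and r_ge_3: "3 \<le> r"
begin

(* Bounds the degree of a 4-set in H and of a 3-set among the cores; for r = 3
   both degrees are 0, whereas (n - 4) choose (r - 4) would evaluate to 1. *)
definition degree_bound :: nat where
  "degree_bound = (if 4 \<le> r then (card V - 3) choose (r - 4) else 0)"

lemma edge_subset: "E \<in> H \<Longrightarrow> E \<subseteq> V"
  and card_edge: "E \<in> H \<Longrightarrow> card E = r"
  using uniform by (auto simp: uniform_hypergraph_def)

lemma finite_edge: "E \<in> H \<Longrightarrow> finite E"
  using edge_subset finite_V finite_subset by blast

lemma finite_H: "finite H"
  using finite_V uniform by (rule uniform_hypergraph_finite)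

lemma H_nonempty: "H \<noteq> {}"
  using codegree by (auto simp: min_pos_codegree_def)

lemma edges_meet: "E \<in> H \<Longrightarrow> F \<in> H \<Longrightarrow> E \<inter> F \<noteq> {}"
  using intersecting by (auto simp: intersecting_def)

lemma card_link_ge_3:
  assumes "E \<in> H" "S \<subseteq> E" "card S = r - 1"
  shows "3 \<le> card (link H S)"
proof -
  have "\<forall>E\<in>H. card E = r" using card_edge by blast
  with codegree le_min_pos_codegree_iff[OF finite_H H_nonempty] r_ge_3 assms show ?thesis
    by auto
qed

lemma card_transversal_ge_3_if_meets_once:
  assumes "transversal H W" "finite W" "E \<in> H" "E \<inter> W = {a}"
  shows "3 \<le> card W"
proof -
  have "a \<in> E" using assms(4) by blast
  then have "card (E - {a}) = r - 1" using card_edge[OF assms(3)] finite_edge[OF assms(3)] by simp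
  then have "3 \<le> card (link H (E - {a}))" using assms(3) by (intro card_link_ge_3) auto
  also have "\<dots> \<le> card W"
    using assms link_subset_transversal[OF assms(1), of "E - {a}"] by (intro card_mono) auto
  finally show ?thesis .
qed

lemma card_transversal_ge_3:
  assumes "transversal H W" "finite W"
  shows "3 \<le> card W"
proof (rule ccontr)
  assume "\<not> 3 \<le> card W"
  obtain E where E: "E \<in> H" using H_nonempty by blast
  with assms(1) obtain a where a: "a \<in> E \<inter> W" unfolding transversal_def by blast
  show False
  proof (cases "E \<inter> W = {a}")
    case True
    with card_transversal_ge_3_if_meets_once[OF assms E] \<open>\<not> 3 \<le> card W\<close> show False by simp
  next
    case False
    then obtain b where b: "b \<in> E \<inter> W" "b \<noteq> a" using a by blast
    have sub: "{a, b} \<subseteq> W" using a b by blast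
    have "card W \<le> card {a, b}" using b(2) \<open>\<not> 3 \<le> card W\<close> by simp
    then have W: "W = {a, b}" using card_seteq[OF assms(2) sub] by simp
    have "transversal H {a}"
      unfolding transversal_def
    proof
      fix F assume F: "F \<in> H"
      then have "F \<inter> W \<noteq> {}" "F \<inter> W \<noteq> {b}"
        using assms card_transversal_ge_3_if_meets_once[OF assms F, of b] W b(2)
        by (auto simp: transversal_def)
      then show "F \<inter> {a} \<noteq> {}" using W by blast
    qed
    with card_transversal_ge_3_if_meets_once[OF _ _ E, of "{a}" a] a show False by auto
  qed
qed

lemma card_edges_containing_4_le:
  assumes "card T = 4"
  shows "card {E\<in>H. T \<subseteq> E} \<le> degree_bound"
proof -
  have "card {E\<in>H. T \<subseteq> E} \<le> (if 4 \<le> r then (card V - 4) choose (r - 4) else 0)"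
    using card_edges_containing_le[OF finite_V uniform, of T] unfolding assms .
  also have "\<dots> \<le> degree_bound" by (simp add: degree_bound_def binomial_right_mono)
  finally show ?thesis .
qed

lemma card_le_if_no_3_transversal:
  assumes "\<nexists>U. transversal H U \<and> card U = 3"
  shows "card H \<le> r ^ 4 * degree_bound"
proof -
  have branch: "\<exists>B. finite B \<and> card B \<le> r \<and> B \<inter> T = {} \<and>
      (\<forall>E\<in>H. T \<subseteq> E \<longrightarrow> B \<inter> E \<noteq> {})"
    if "finite T" "card T < 4" for T
  proof -
    have "\<not> transversal H T"
      using that assms card_transversal_ge_3[of T] by (cases "card T = 3") auto
    then obtain F where "F \<in> H" "F \<inter> T = {}" unfolding transversal_def by blast
    then show ?thesis using finite_edge card_edge edges_meet by (intro exI[of _ F]) auto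
  qed
  have "card {E\<in>H. {} \<subseteq> E} \<le> r ^ 4 * degree_bound"
    by (rule card_edges_containing_le_branching[where k = 4 and m = 4])
      (use finite_H branch card_edges_containing_4_le in auto)
  then show ?thesis by simp
qed

end

locale three_transversal = codegree3_intersecting +
  fixes U :: "'a set"
  assumes transversal_U: "transversal H U" and card_U: "card U = 3"
begin

definition cores :: "'a set set" where
  "cores = {R. R \<inter> U = {} \<and> (\<forall>u\<in>U. insert u R \<in> H)}"

definition core_edges :: "'a set \<Rightarrow> 'a set set" where
  "core_edges R = (\<lambda>u. insert u R) ` U \<union> (\<lambda>(u, x). (R - {x}) \<union> (U - {u})) ` (U \<times> R)"

lemma finite_U: "finite U"
  using card_U card.infinite by fastforce

lemma U_eq:
  obtains a b c where "U = {a, b, c}" "a \<noteq> b" "b \<noteq> c" "a \<noteq> c"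
  using card_U by (metis card_3_iff)

lemma U_subset: "U \<subseteq> V"
proof -
  have "transversal H (U \<inter> V)"
    using transversal_U edge_subset unfolding transversal_def by blast
  then have "3 \<le> card (U \<inter> V)" using finite_U by (intro card_transversal_ge_3) auto
  then have "U \<inter> V = U" using card_U finite_U by (intro card_seteq) auto
  then show ?thesis by blast
qed

lemma edge_meets_U: "E \<in> H \<Longrightarrow> E \<inter> U \<noteq> {}"
  using transversal_U by (auto simp: transversal_def)

lemma Diff_singleton_in_cores:
  assumes E: "E \<in> H" and u: "E \<inter> U = {u}"
  shows "E - {u} \<in> cores"
proof -
  have "u \<in> E" using u by blast
  then have "card (E - {u}) = r - 1" using card_edge[OF E] finite_edge[OF E] by simp
  then have "3 \<le> card (link H (E - {u}))" using E by (intro card_link_ge_3) auto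
  moreover have "link H (E - {u}) \<subseteq> U" using u by (intro link_subset_transversal transversal_U) blast
  ultimately have "link H (E - {u}) = U" using card_U finite_U by (intro card_seteq) auto
  with u show ?thesis unfolding cores_def link_def by blast
qed

lemma core_disjoint: "R \<in> cores \<Longrightarrow> R \<inter> U = {}"
  and core_insert_edge: "R \<in> cores \<Longrightarrow> u \<in> U \<Longrightarrow> insert u R \<in> H"
  by (auto simp: cores_def)

lemma cores_uniform: "uniform_hypergraph V (r - 1) cores"
  unfolding uniform_hypergraph_def
proof
  fix R assume R: "R \<in> cores"
  obtain u where u: "u \<in> U" using U_eq by blast
  then have "insert u R \<in> H" "u \<notin> R" using R by (auto simp: cores_def)
  then show "R \<subseteq> V \<and> card R = r - 1"
    using edge_subset card_edge finite_edge by fastforce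
qed

lemma card_core: "R \<in> cores \<Longrightarrow> card R = r - 1"
  and core_subset: "R \<in> cores \<Longrightarrow> R \<subseteq> V"
  using cores_uniform by (auto simp: uniform_hypergraph_def)

lemma finite_core: "R \<in> cores \<Longrightarrow> finite R"
  using core_subset finite_V finite_subset by blast

lemma finite_cores: "finite cores"
  using finite_V cores_uniform by (rule uniform_hypergraph_finite)

lemma cores_intersecting: "intersecting cores"
  unfolding intersecting_def
proof (intro ballI)
  fix R R' assume R: "R \<in> cores" and R': "R' \<in> cores"
  obtain a b where ab: "a \<in> U" "b \<in> U" "a \<noteq> b"
    using U_eq by (metis insertI1 insertI2)
  have "insert a R \<inter> insert b R' \<noteq> {}"
    using edges_meet core_insert_edge R R' ab by blast
  moreover have "a \<notin> R'" "b \<notin> R" using core_disjoint R R' ab by blast+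
  ultimately show "R \<inter> R' \<noteq> {}" using ab(3) by blast
qed

(* The (r-1)-set S = insert a (R - {y}), a in U, has at least three extensions to an edge. None
   lies in U, since that edge would miss insert u R' for the remaining vertex u of U, and every
   extension other than y turns R - {y} into a new core. *)
lemma core_exchange:
  assumes R: "R \<in> cores" and y: "y \<in> R" and R': "R' \<in> cores" and disj: "(R - {y}) \<inter> R' = {}"
  shows "\<exists>x. x \<notin> R \<and> x \<noteq> z \<and> insert x (R - {y}) \<in> cores"
proof (rule ccontr)
  assume neg: "\<not> ?thesis"
  obtain a b c where U: "U = {a, b, c}" "a \<noteq> b" "b \<noteq> c" "a \<noteq> c" by (rule U_eq)
  define S where "S = insert a (R - {y})"
  have "a \<notin> R" using core_disjoint[OF R] U by blast
  then have "card S = r - 1"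
    using card_core[OF R] finite_core[OF R] y r_ge_3 by (simp add: S_def)
  moreover have "insert a R \<in> H" using core_insert_edge[OF R] U by blast
  ultimately have "3 \<le> card (link H S)" by (intro card_link_ge_3) (auto simp: S_def)
  have "link H S \<subseteq> {y, z}"
  proof
    fix x assume "x \<in> link H S"
    then have xS: "x \<notin> S" and E: "insert x S \<in> H" by (auto simp: link_def)
    have "x \<notin> U"
    proof
      assume "x \<in> U"
      moreover have "x \<noteq> a" using xS by (simp add: S_def)
      ultimately obtain u where u: "u \<in> U" "u \<noteq> a" "u \<noteq> x" using U by blast
      then have "insert x S \<inter> insert u R' \<noteq> {}"
        using edges_meet[OF E core_insert_edge[OF R']] by blast
      moreover have "u \<notin> R" "x \<notin> R'" "a \<notin> R'"
        using core_disjoint[OF R] core_disjoint[OF R'] u \<open>x \<in> U\<close> U by blast+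
      ultimately show False using disj u by (auto simp: S_def)
    qed
    show "x \<in> {y, z}"
    proof (rule ccontr)
      assume "x \<notin> {y, z}"
      have "insert x S \<inter> U = {a}" using \<open>x \<notin> U\<close> core_disjoint[OF R] U by (auto simp: S_def)
      then have "insert x S - {a} \<in> cores" by (rule Diff_singleton_in_cores[OF E])
      moreover have "insert x S - {a} = insert x (R - {y})"
        using xS \<open>a \<notin> R\<close> by (auto simp: S_def)
      moreover have "x \<notin> R" using xS \<open>x \<notin> {y, z}\<close> by (auto simp: S_def)
      ultimately show False using neg \<open>x \<notin> {y, z}\<close> by auto
    qed
  qed
  then have "card (link H S) \<le> card {y, z}" by (intro card_mono) auto
  also have "\<dots> \<le> 2" by (simp add: card_insert_if)
  finally show False using \<open>3 \<le> card (link H S)\<close> by simp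
qed

lemma exists_core_of_two_point_edge:
  assumes E: "E \<in> H" and two: "card (E \<inter> U) = 2"
  shows "\<exists>x. x \<notin> E - U \<and> insert x (E - U) \<in> cores"
proof -
  obtain a where a: "a \<in> E" "a \<in> U" using two by (metis card.empty disjoint_iff zero_neq_numeral)
  define S where "S = insert a (E - U)"
  have "card (E - U) = r - 2"
    using card_edge[OF E] finite_edge[OF E] two by (simp add: card_Diff_subset_Int)
  then have "card S = r - 1" using finite_edge[OF E] a r_ge_3 by (simp add: S_def)
  then have "3 \<le> card (link H S)" using E a by (intro card_link_ge_3) (auto simp: S_def)
  moreover have "card (U - {a}) = 2" using a card_U finite_U by simp
  ultimately have "\<not> link H S \<subseteq> U - {a}"
    using card_mono[of "U - {a}" "link H S"] finite_U by auto
  then obtain x where x: "x \<in> link H S" "x \<notin> U - {a}" by blast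
  then have "x \<notin> U" "insert x S \<in> H" "x \<notin> S" by (auto simp: link_def S_def)
  then have "insert x S \<inter> U = {a}" using a by (auto simp: S_def)
  then have "insert x S - {a} \<in> cores" by (rule Diff_singleton_in_cores[OF \<open>insert x S \<in> H\<close>])
  moreover have "insert x S - {a} = insert x (E - U)" using \<open>x \<notin> U\<close> a(2) by (auto simp: S_def)
  ultimately show ?thesis using \<open>x \<notin> S\<close> by (auto simp: S_def)
qed

lemma edge_cases:
  assumes E: "E \<in> H"
  shows "U \<subseteq> E \<or> (\<exists>R\<in>cores. E \<in> core_edges R)"
proof -
  have "card (E \<inter> U) \<noteq> 0" using edge_meets_U[OF E] finite_U by simp
  moreover have "card (E \<inter> U) \<le> 3" using card_U finite_U card_mono[of U "E \<inter> U"] by simp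
  ultimately consider "card (E \<inter> U) = 3" | "card (E \<inter> U) = 1" | "card (E \<inter> U) = 2" by linarith
  then show ?thesis
  proof cases
    case 1
    then have "E \<inter> U = U" using card_U finite_U by (intro card_seteq) auto
    then show ?thesis by blast
  next
    case 2
    then obtain u where u: "E \<inter> U = {u}" by (auto simp: card_1_singleton_iff)
    then have "E = insert u (E - {u})" "u \<in> U" by blast+
    with Diff_singleton_in_cores[OF E u] show ?thesis unfolding core_edges_def by blast
  next
    case 3
    then have "card (U - E) = 1" using card_U finite_U by (simp add: card_Diff_subset_Int Int_commute)
    then obtain u where u: "U - E = {u}" by (auto simp: card_1_singleton_iff)
    obtain x where x: "x \<notin> E - U" "insert x (E - U) \<in> cores"
      using exists_core_of_two_point_edge[OF E 3] by blast
    have "E = (insert x (E - U) - {x}) \<union> (U - {u})" using x(1) u by blast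
    then have "E \<in> core_edges (insert x (E - U))"
      unfolding core_edges_def using u by (intro UnI2 image_eqI[of _ _ "(u, x)"]) auto
    with x(2) show ?thesis by blast
  qed
qed

lemma card_core_edges:
  assumes "R \<in> cores"
  shows "card (core_edges R) \<le> 3 * r"
proof -
  have "card (core_edges R) \<le> card U + card (U \<times> R)"
    unfolding core_edges_def by (intro card_Un_le[THEN le_trans] add_mono card_image_le)
      (use finite_U finite_core[OF assms] in auto)
  also have "\<dots> = 3 * r" using card_U card_core[OF assms] r_ge_3 by (simp add: card_cartesian_product)
  finally show ?thesis .
qed

lemma card_le_cores: "card H \<le> ((card V - 3) choose (r - 3)) + card cores * (3 * r)"
proof -
  have "finite (\<Union>R\<in>cores. core_edges R)"
    using finite_cores finite_U finite_core by (auto simp: core_edges_def)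
  moreover have "H \<subseteq> {E\<in>H. U \<subseteq> E} \<union> (\<Union>R\<in>cores. core_edges R)" using edge_cases by blast
  ultimately have "card H \<le> card ({E\<in>H. U \<subseteq> E} \<union> (\<Union>R\<in>cores. core_edges R))"
    using finite_H by (intro card_mono) auto
  also have "\<dots> \<le> card {E\<in>H. U \<subseteq> E} + card (\<Union>R\<in>cores. core_edges R)"
    by (rule card_Un_le)
  finally have "card H \<le> card {E\<in>H. U \<subseteq> E} + card (\<Union>R\<in>cores. core_edges R)" .
  moreover have "card {E\<in>H. U \<subseteq> E} \<le> (card V - 3) choose (r - 3)"
    using card_edges_containing_le[OF finite_V uniform, of U] card_U r_ge_3 by simp
  moreover have "card (\<Union>R\<in>cores. core_edges R) \<le> card cores * (3 * r)"
    using finite_cores card_core_edges by (rule card_UN_le_mult)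
  ultimately show ?thesis by linarith
qed

lemma card_inter_common_pair_ge_3:
  assumes "d \<noteq> e" "d \<notin> U" "e \<notin> U" and de: "\<forall>R\<in>cores. d \<in> R \<and> e \<in> R" and E: "E \<in> H"
  shows "3 \<le> card (E \<inter> (U \<union> {d, e}))"
proof -
  let ?X = "U \<union> {d, e}"
  have three: "3 \<le> card (E \<inter> ?X)" if "A \<subseteq> E \<inter> ?X" "card A = 3" for A
    using that finite_U by (metis card_mono finite_Int finite_Un finite.emptyI finite.insertI)
  consider "U \<subseteq> E" | R where "R \<in> cores" "E \<in> core_edges R" using edge_cases[OF E] by blast
  then show ?thesis
  proof cases
    case 1
    then show ?thesis using three[of U] card_U by blast
  next
    case (2 R)
    then have dR: "d \<in> R" "e \<in> R" using de by blast+
    from 2(2) consider u where "u \<in> U" "E = insert u R"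
      | u x where "u \<in> U" "x \<in> R" "E = (R - {x}) \<union> (U - {u})"
      unfolding core_edges_def by blast
    then show ?thesis
    proof cases
      case (1 u)
      then have "u \<noteq> d" "u \<noteq> e" using assms(2,3) by blast+
      with 1 have "{u, d, e} \<subseteq> E \<inter> ?X" "card {u, d, e} = 3" using dR assms(1) by auto
      then show ?thesis by (rule three)
    next
      case (2 u x)
      obtain w where w: "w \<in> {d, e}" "w \<noteq> x" using assms(1) by blast
      then have "insert w (U - {u}) \<subseteq> E \<inter> ?X" using 2 dR by auto
      moreover have "card (insert w (U - {u})) = 3" using w assms(2,3) 2(1) card_U finite_U by auto
      ultimately show ?thesis by (rule three)
    qed
  qed
qed

lemma kernel_if_common_pair:
  assumes "cores \<noteq> {}" "d \<noteq> e" and de: "\<forall>R\<in>cores. d \<in> R \<and> e \<in> R"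
  shows "U \<union> {d, e} \<subseteq> V" "card (U \<union> {d, e}) = 5" "H \<subseteq> kernel_edges V r 3 (U \<union> {d, e})"
proof -
  obtain R0 where R0: "R0 \<in> cores" using assms(1) by blast
  then have "d \<in> R0" "e \<in> R0" using de by blast+
  then have deV: "d \<in> V" "e \<in> V" "d \<notin> U" "e \<notin> U"
    using core_subset[OF R0] core_disjoint[OF R0] by blast+
  then show "U \<union> {d, e} \<subseteq> V" using U_subset by blast
  show "card (U \<union> {d, e}) = 5" using deV assms(2) card_U finite_U by (simp add: card_insert_if)
  show "H \<subseteq> kernel_edges V r 3 (U \<union> {d, e})"
    using card_inter_common_pair_ge_3[OF assms(2) deV(3,4) de] edge_subset card_edge
    by (auto simp: kernel_edges_def)
qed

lemma core_minus_point_meets_cores: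
  assumes R': "R' \<in> cores" "R' \<inter> T = {y}" and T: "T \<subseteq> {y, z}" "transversal cores T"
    and R: "R \<in> cores"
  shows "(R' - {y}) \<inter> R \<noteq> {}"
proof
  assume "(R' - {y}) \<inter> R = {}"
  moreover have "y \<in> R'" using R'(2) by blast
  ultimately obtain x where x: "x \<notin> R'" "x \<noteq> z" "insert x (R' - {y}) \<in> cores"
    using core_exchange[OF R'(1) _ R] by blast
  then have "insert x (R' - {y}) \<inter> T = {}" using R'(2) T(1) \<open>y \<in> R'\<close> by blast
  with x(3) T(2) show False by (auto simp: transversal_def)
qed

lemma core_meeting_transversal_once:
  assumes no_pair: "\<nexists>d e. d \<noteq> e \<and> (\<forall>R\<in>cores. d \<in> R \<and> e \<in> R)"
    and "cores \<noteq> {}" "transversal cores T" "finite T" "card T < 3"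
  obtains R' y z where "R' \<in> cores" "R' \<inter> T = {y}" "T \<subseteq> {y, z}"
proof -
  obtain R0 where "R0 \<in> cores" using assms(2) by blast
  then have "T \<noteq> {}" using assms(3) by (auto simp: transversal_def)
  with assms(4) have "card T \<noteq> 0" by simp
  with assms(5) have "card T = 1 \<or> card T = 2" by linarith
  then consider y where "T = {y}" | y z where "T = {y, z}" "y \<noteq> z"
    by (auto simp: card_1_singleton_iff card_2_iff)
  then show ?thesis
  proof cases
    case (1 y)
    then show ?thesis using that[of R0 y y] \<open>R0 \<in> cores\<close> assms(3) by (auto simp: transversal_def)
  next
    case (2 y z)
    with no_pair obtain R' where "R' \<in> cores" "y \<notin> R' \<or> z \<notin> R'" by blast
    moreover have "R' \<inter> T \<noteq> {}" using \<open>R' \<in> cores\<close> assms(3) by (auto simp: transversal_def)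
    ultimately show ?thesis using that[of R' y z] that[of R' z y] 2 by blast
  qed
qed

lemma card_cores_le:
  assumes no_pair: "\<nexists>d e. d \<noteq> e \<and> (\<forall>R\<in>cores. d \<in> R \<and> e \<in> R)"
  shows "card cores \<le> r ^ 3 * degree_bound"
proof (cases "cores = {}")
  case True
  then show ?thesis by simp
next
  case False
  have branch: "\<exists>B. finite B \<and> card B \<le> r \<and> B \<inter> T = {} \<and>
      (\<forall>R\<in>cores. T \<subseteq> R \<longrightarrow> B \<inter> R \<noteq> {})"
    if T: "finite T" "card T < 3" for T
  proof (cases "transversal cores T")
    case False
    then obtain R where "R \<in> cores" "R \<inter> T = {}" unfolding transversal_def by blast
    then show ?thesis
      using finite_core card_core cores_intersecting
      by (intro exI[of _ R]) (auto simp: intersecting_def)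
  next
    case True
    then obtain R' y z where R': "R' \<in> cores" "R' \<inter> T = {y}" and "T \<subseteq> {y, z}"
      using core_meeting_transversal_once[OF no_pair \<open>cores \<noteq> {}\<close> _ T] by blast
    then show ?thesis
      using core_minus_point_meets_cores[OF R' _ True] finite_core[OF R'(1)] card_core[OF R'(1)]
        card_Diff1_le[of R' y]
      by (intro exI[of _ "R' - {y}"]) auto
  qed
  moreover have "card {R\<in>cores. T \<subseteq> R} \<le> degree_bound" if "card T = 3" for T
  proof -
    have "(if 3 \<le> r - 1 then (card V - 3) choose (r - 1 - 3) else 0) = degree_bound"
      by (cases "4 \<le> r") (simp_all add: degree_bound_def)
    then show ?thesis using card_edges_containing_le[OF finite_V cores_uniform, of T]
      unfolding that by simp
  qed
  ultimately have "card {R\<in>cores. {} \<subseteq> R} \<le> r ^ 3 * degree_bound"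
    by (intro card_edges_containing_le_branching[where k = 3 and m = 3] finite_cores) auto
  then show ?thesis by simp
qed

lemma card_le_unless_kernel:
  assumes no_kernel: "\<nexists>X. X \<subseteq> V \<and> card X = 5 \<and> H \<subseteq> kernel_edges V r 3 X"
  shows "card H \<le> ((card V - 3) choose (r - 3)) + 3 * r ^ 4 * degree_bound"
proof -
  have "card cores \<le> r ^ 3 * degree_bound"
  proof (cases "cores = {}")
    case False
    have "\<nexists>d e. d \<noteq> e \<and> (\<forall>R\<in>cores. d \<in> R \<and> e \<in> R)"
    proof
      assume "\<exists>d e. d \<noteq> e \<and> (\<forall>R\<in>cores. d \<in> R \<and> e \<in> R)"
      then obtain d e where "d \<noteq> e" "\<forall>R\<in>cores. d \<in> R \<and> e \<in> R" by blast
      from kernel_if_common_pair[OF False this] no_kernel show False by blast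
    qed
    then show ?thesis by (rule card_cores_le)
  qed simp
  then have "card cores * (3 * r) \<le> r ^ 3 * degree_bound * (3 * r)" by (rule mult_le_mono1)
  also have "\<dots> = 3 * r ^ 4 * degree_bound" by (simp add: eval_nat_numeral algebra_simps)
  finally show ?thesis using card_le_cores by linarith
qed

end

lemma (in codegree3_intersecting) ex_kernel_superset:
  assumes "2 * r ^ 5 \<le> card V" "10 * ((card V - 5) choose (r - 3)) \<le> card H"
  shows "\<exists>X. X \<subseteq> V \<and> card X = 5 \<and> H \<subseteq> kernel_edges V r 3 X"
proof (rule ccontr)
  assume no_kernel: "\<not> ?thesis"
  have "((card V - 3) choose (r - 3)) + 3 * r ^ 4 * degree_bound < 10 * ((card V - 5) choose (r - 3))"
    using kernel_count_exceeds[OF r_ge_3 assms(1)] by (simp add: degree_bound_def)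
  moreover have "card H \<le> ((card V - 3) choose (r - 3)) + 3 * r ^ 4 * degree_bound"
  proof (cases "\<exists>U. transversal H U \<and> card U = 3")
    case True
    then obtain U where "transversal H U" "card U = 3" by blast
    then interpret three_transversal V H r U
      by (intro three_transversal.intro three_transversal_axioms.intro codegree3_intersecting_axioms)
    show ?thesis using no_kernel by (intro card_le_unless_kernel) blast
  next
    case False
    then have "card H \<le> r ^ 4 * degree_bound" by (rule card_le_if_no_3_transversal)
    then show ?thesis by linarith
  qed
  ultimately show False using assms(2) by linarith
qed

theorem theorem9:
  fixes V :: "'a set" and H :: "'a set set" and r n :: nat
  assumes "r \<ge> 3"
    and "n \<ge> 2 * r ^ 5"
    and "finite V" and "card V = n"
    and "uniform_hypergraph V r H"
    and "intersecting H"
    and "min_pos_codegree r H \<ge> 3"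
    and "\<forall>H'. uniform_hypergraph V r H' \<and> intersecting H' \<and> min_pos_codegree r H' \<ge> 3
              \<longrightarrow> card H' \<le> card H"
  shows "kernel_system V r 3 H"
proof -
  interpret codegree3_intersecting V H r
    using assms(1,3,5-7) by unfold_locales
  have "r \<le> r ^ 5" using assms(1) by (simp add: self_le_power)
  then have size: "r + 2 \<le> card V" "5 \<le> card V" using assms(1,2,4) by linarith+
  have kernel_le_H: "card (kernel_edges V r 3 X) \<le> card H" if "X \<subseteq> V" "card X = 5" for X
    using assms(8) kernel_edges_3_competitor[OF assms(3) that assms(1) size(1)] by blast
  obtain X0 where X0: "X0 \<subseteq> V" "card X0 = 5" using obtain_subset_with_card_n[OF size(2)] by metis
  have "(5::nat) choose 3 = 10" by (simp add: numeral_eq_Suc)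
  then have "10 * ((card V - 5) choose (r - 3)) \<le> card H"
    using card_kernel_edges_ge[OF assms(3) X0(1), of 3 r] kernel_le_H[OF X0] X0(2) assms(1) by simp
  then obtain X where X: "X \<subseteq> V" "card X = 5" "H \<subseteq> kernel_edges V r 3 X"
    using ex_kernel_superset assms(2,4) by blast
  then have "H = kernel_edges V r 3 X"
    using kernel_le_H[OF X(1,2)] finite_kernel_edges[OF assms(3)] by (intro card_seteq) auto
  with X show ?thesis unfolding kernel_system_iff by auto
qed

end
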